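(* Let $A=KQ/I$ be a linear Nakayama algebra with vertices $Q_0=\{1,\ldots,n\}$ labelled canonically $1\to2\to\cdots\to n$, and let $i\in Q_0$ with $e(S_i)\ge 2$. Then there exists an indecomposable $A$-module $M$ with a minimal injective coresolution $0\to M\to I^0\to\cdots\to I^d\to 0$ such that $I^d\cong I(i)$, $d=\operatorname{idim}M=e(S_i)-1$, and moreover $$\underline{\dim}(M)_{[1:\hat h(i)-1]}=r_j(\omega_A,\hat h(i)-1)\quad\text{and}\quad \underline{\dim}(M)_{[\hat h(i):n]}=0$$ for some $j>i$. In particular, $M$ has no composition factor $S_\ell$ with $\ell\ge \hat h(i)$.
   Context: A linear Nakayama algebra is $A=KQ/I$ with $K$ a field, $Q$ the quiver $1\to2\to\cdots\to n$ and $I$ admissible. Modules are finitely generated right modules; $S_i$, $I(i)=D(Ae_i)$ denote simple and indecomposable injective modules, $I(S)$ the injective envelope of $S$, $\Omega$ the syzygy. For a simple $S$, $e(S)=\min\{\operatorname{pdim}S,\operatorname{pdim}I(S)\}$; $N(S)=S$ if $e(S)$ is odd and $N(S)=I(S)$ if $e(S)$ is even; $h(S)=\operatorname{top}\Omega^{e(S)}(N(S))$ (a simple module), and $\hat h(i)=j$ if $h(S_i)\cong S_j$. The Cartan matrix is $\omega_A=(\dim_K e_jAe_i)_{i,j}$ (its $j$-th row is $\underline{\dim}\,I(j)$). For an $n\times n$ matrix $B$, $r_j(B,k)$ denotes the vector of the first $k$ entries of the $j$-th row of $B$; for a vector $v=(v_1,\ldots,v_n)$, $v_{[a:b]}=(v_a,\ldots,v_b)$.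 $\underline{\dim}(M)$ is the dimension vector of $M$. *)

theory Defs
  imports Main
begin

text \<open>
Combinatorial model of a linear Nakayama algebra A = KQ/I, Q = 1 -> 2 -> ... -> n,
right modules = representations of Q.  Since between two vertices of Q there is at
most one path, every admissible I is spanned by paths, and A is determined by its
Kupisch series c, where c a = length of the indecomposable projective P(a) = e_a A.
Indecomposable modules are (up to isomorphism) the uniserial interval modules
M(a,b) with composition factors S_a (top), ..., S_b (socle), existing iff
b - a + 1 <= c a.  The zero module is represented by None.
\<close>

definition kupisch :: "nat \<Rightarrow> (nat \<Rightarrow> nat) \<Rightarrow> bool" where
  "kupisch n c \<longleftrightarrow> n \<ge> 1 \<and> c n = 1 \<and>
     (\<forall>a\<in>{1..<n}. 2 \<le> c a \<and> c a \<le> c (Suc a) + 1)"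

definition is_mod :: "nat \<Rightarrow> (nat \<Rightarrow> nat) \<Rightarrow> nat \<times> nat \<Rightarrow> bool" where
  "is_mod n c M \<longleftrightarrow> (case M of (a,b) \<Rightarrow> 1 \<le> a \<and> a \<le> b \<and> b \<le> n \<and> b - a + 1 \<le> c a)"

definition dimvec :: "nat \<times> nat \<Rightarrow> nat \<Rightarrow> nat" where
  "dimvec M l = (case M of (a,b) \<Rightarrow> if a \<le> l \<and> l \<le> b then 1 else 0)"

definition simple :: "nat \<Rightarrow> nat \<times> nat" where
  "simple i = (i, i)"

definition projmod :: "(nat \<Rightarrow> nat) \<Rightarrow> nat \<Rightarrow> nat \<times> nat" where
  "projmod c a = (a, a + c a - 1)"

text \<open>indecomposable injective I(b) = D(A e_b): the vertices k <= b with a nonzero path k -> b\<close>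
definition injstart :: "(nat \<Rightarrow> nat) \<Rightarrow> nat \<Rightarrow> nat" where
  "injstart c b = (LEAST k. 1 \<le> k \<and> b - k + 1 \<le> c k)"

definition injmod :: "(nat \<Rightarrow> nat) \<Rightarrow> nat \<Rightarrow> nat \<times> nat" where
  "injmod c b = (injstart c b, b)"

text \<open>syzygy: kernel of the projective cover P(a) -> M(a,b)\<close>
definition syz :: "(nat \<Rightarrow> nat) \<Rightarrow> nat \<times> nat \<Rightarrow> (nat \<times> nat) option" where
  "syz c M = (case M of (a,b) \<Rightarrow>
     if b < a + c a - 1 then Some (b + 1, a + c a - 1) else None)"

text \<open>cosyzygy: cokernel of the injective envelope M(a,b) -> I(b)\<close>
definition cosyz :: "(nat \<Rightarrow> nat) \<Rightarrow> nat \<times> nat \<Rightarrow> (nat \<times> nat) option" where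
  "cosyz c M = (case M of (a,b) \<Rightarrow>
     if injstart c b < a then Some (injstart c b, a - 1) else None)"

definition syzo :: "(nat \<Rightarrow> nat) \<Rightarrow> (nat \<times> nat) option \<Rightarrow> (nat \<times> nat) option" where
  "syzo c M = Option.bind M (syz c)"

definition cosyzo :: "(nat \<Rightarrow> nat) \<Rightarrow> (nat \<times> nat) option \<Rightarrow> (nat \<times> nat) option" where
  "cosyzo c M = Option.bind M (cosyz c)"

text \<open>projective / injective dimension of a nonzero indecomposable module
  (finite, since linear Nakayama algebras have finite global dimension)\<close>
definition pdim :: "(nat \<Rightarrow> nat) \<Rightarrow> nat \<times> nat \<Rightarrow> nat" where
  "pdim c M = (LEAST m. (syzo c ^^ Suc m) (Some M) = None)"

definition idim :: "(nat \<Rightarrow> nat) \<Rightarrow> nat \<times> nat \<Rightarrow> nat" where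
  "idim c M = (LEAST m. (cosyzo c ^^ Suc m) (Some M) = None)"

text \<open>k-th term I^k of the minimal injective coresolution of M: the injective
  envelope of the k-th cosyzygy (an indecomposable injective, as the cosyzygy is uniserial)\<close>
definition inj_coresol_term :: "(nat \<Rightarrow> nat) \<Rightarrow> nat \<times> nat \<Rightarrow> nat \<Rightarrow> nat \<times> nat" where
  "inj_coresol_term c M k = injmod c (snd (the ((cosyzo c ^^ k) (Some M))))"

definition e_simple :: "(nat \<Rightarrow> nat) \<Rightarrow> nat \<Rightarrow> nat" where
  "e_simple c i = min (pdim c (simple i)) (pdim c (injmod c i))"

definition N_simple :: "(nat \<Rightarrow> nat) \<Rightarrow> nat \<Rightarrow> nat \<times> nat" where
  "N_simple c i = (if odd (e_simple c i) then simple i else injmod c i)"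

text \<open>top of Omega^{e(S_i)}(N(S_i)) is the simple S_{hhat i}\<close>
definition hhat :: "(nat \<Rightarrow> nat) \<Rightarrow> nat \<Rightarrow> nat" where
  "hhat c i = fst (the ((syzo c ^^ e_simple c i) (Some (N_simple c i))))"

text \<open>Cartan matrix omega_A, entry (i,j) = dim e_j A e_i = [nonzero path j -> i]\<close>
definition cartan :: "(nat \<Rightarrow> nat) \<Rightarrow> nat \<Rightarrow> nat \<Rightarrow> nat" where
  "cartan c i j = (if j \<le> i \<and> i - j + 1 \<le> c j then 1 else 0)"

end

theory Submission imports Defs begin

text \<open>
Write the module with composition factors S_(u+1), ..., S_v as the half-open interval (u, v]. Then
P(u+1) = (u, proj_bound c u] and I(v) = (inj_bound c v, v]; the syzygy of (u, v] is
(v, proj_bound c u] and its cosyzygy is (inj_bound c v, u]; and the two bounds form a Galois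
connection: inj_bound c v \<le> u iff v \<le> proj_bound c u.

Let x = syzS and z = syzI be the syzygy orbits of S_i = (i - 1, i] and of I(i) = (inj_bound c i, i]. They
agree at odd places, z \<le> x at even places, and both increase strictly up to place e + 1,
because e is at most the projective dimension of both modules. Take M = (inj_bound c z_(e+1), z_e],
the part of I(z_(e+1)) below the vertex hhat i = z_e + 1. Applying the Galois connection step by
step squeezes the cosyzygy orbit y = cosyzM of M as x_(e-1-t) < y_t \<le> z_(e-t), so y decreases strictly;
the bracket (x_0, z_1] = (i - 1, i] forces y_(e-1) = i, and then y_e = y_(e+1) = inj_bound c i.
Hence idim M = e - 1 with last term I(i). Only e \<le> min (pdim S_i) (pdim I(i)) is used.
\<close>

definition proj_bound :: "(nat \<Rightarrow> nat) \<Rightarrow> nat \<Rightarrow> nat" where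
  "proj_bound c u = u + c (Suc u)"

definition inj_bound :: "(nat \<Rightarrow> nat) \<Rightarrow> nat \<Rightarrow> nat" where
  "inj_bound c v = injstart c v - 1"

locale linear_nakayama =
  fixes n :: nat and c :: "nat \<Rightarrow> nat"
  assumes kupisch: "kupisch n c"
begin

lemma n_pos: "1 \<le> n"
  using kupisch by (simp add: kupisch_def)

lemma kupisch_step: "1 \<le> a \<Longrightarrow> a < n \<Longrightarrow> 2 \<le> c a \<and> c a \<le> c (Suc a) + 1"
  using kupisch by (simp add: kupisch_def)

lemma c_pos:
  assumes "1 \<le> a" "a \<le> n"
  shows "1 \<le> c a"
proof (cases "a < n")
  case True
  then show ?thesis using kupisch_step[OF assms(1)] by linarith
next
  case False
  then show ?thesis using assms kupisch by (simp add: kupisch_def)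
qed

lemma proj_end_le: "a \<le> n \<Longrightarrow> 1 \<le> a \<Longrightarrow> a + c a \<le> Suc n"
proof (induction a rule: inc_induct)
  case base
  then show ?case using kupisch by (simp add: kupisch_def)
next
  case (step a)
  then have "c a \<le> c (Suc a) + 1" using kupisch_step by simp
  then show ?case using step by simp
qed

lemma proj_bound_le: "u < n \<Longrightarrow> proj_bound c u \<le> n"
  using proj_end_le[of "Suc u"] by (simp add: proj_bound_def)

lemma proj_bound_mono: "u \<le> u' \<Longrightarrow> u' < n \<Longrightarrow> proj_bound c u \<le> proj_bound c u'"
proof (induction u' rule: dec_induct)
  case (step m)
  then have "c (Suc m) \<le> c (Suc (Suc m)) + 1" using kupisch_step by simp
  then show ?case using step by (simp add: proj_bound_def)
qed simp

lemma injstart_spec: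
  assumes "v \<le> n"
  shows "1 \<le> injstart c v" "injstart c v \<le> max 1 v" "v - injstart c v + 1 \<le> c (injstart c v)"
proof -
  have witness: "1 \<le> max 1 v \<and> v - max 1 v + 1 \<le> c (max 1 v)"
    using c_pos[of "max 1 v"] assms n_pos by auto
  show "1 \<le> injstart c v" "v - injstart c v + 1 \<le> c (injstart c v)"
    unfolding injstart_def using LeastI[where P = "\<lambda>k. 1 \<le> k \<and> v - k + 1 \<le> c k", OF witness] by auto
  show "injstart c v \<le> max 1 v"
    unfolding injstart_def by (rule Least_le) (rule witness)
qed

lemma injstart_eq: "v \<le> n \<Longrightarrow> injstart c v = Suc (inj_bound c v)"
  using injstart_spec(1)[of v] by (simp add: inj_bound_def)

lemma path_iff_le_proj_bound:
  "1 \<le> k \<Longrightarrow> k \<le> n \<Longrightarrow> v - k + 1 \<le> c k \<longleftrightarrow> v \<le> proj_bound c (k - 1)"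
  using c_pos[of k] by (cases "k \<le> v") (auto simp: proj_bound_def)

lemma inj_bound_le_iff:
  assumes "u < n" "v \<le> n"
  shows "inj_bound c v \<le> u \<longleftrightarrow> v \<le> proj_bound c u"
proof
  assume "inj_bound c v \<le> u"
  have "v \<le> proj_bound c (injstart c v - 1)"
    using path_iff_le_proj_bound[of "injstart c v" v] injstart_spec[OF assms(2)] assms(2) n_pos by auto
  also have "\<dots> \<le> proj_bound c u"
    using proj_bound_mono \<open>inj_bound c v \<le> u\<close> assms(1) by (simp add: inj_bound_def)
  finally show "v \<le> proj_bound c u" .
next
  assume "v \<le> proj_bound c u"
  then have "v - Suc u + 1 \<le> c (Suc u)"
    using path_iff_le_proj_bound[of "Suc u" v] assms(1) by simp
  then have "injstart c v \<le> Suc u"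
    unfolding injstart_def by (intro Least_le) simp
  then show "inj_bound c v \<le> u" by (simp add: inj_bound_def)
qed

lemma inj_bound_le: "v \<le> n \<Longrightarrow> inj_bound c v \<le> v"
  using injstart_spec(2)[of v] by (simp add: inj_bound_def)

lemma inj_bound_less: "1 \<le> v \<Longrightarrow> v \<le> n \<Longrightarrow> inj_bound c v < v"
  using injstart_spec(1,2)[of v] by (simp add: inj_bound_def)

lemma inj_bound_less_n: "v \<le> n \<Longrightarrow> inj_bound c v < n"
  using injstart_spec(1,2)[of v] n_pos by (simp add: inj_bound_def)

lemma le_proj_bound_inj_bound: "v \<le> n \<Longrightarrow> v \<le> proj_bound c (inj_bound c v)"
  using inj_bound_le_iff[OF inj_bound_less_n] by blast

lemma inj_bound_mono: "v \<le> v' \<Longrightarrow> v' \<le> n \<Longrightarrow> inj_bound c v \<le> inj_bound c v'"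
  using inj_bound_le_iff[OF inj_bound_less_n, of v' v] le_proj_bound_inj_bound[of v'] by simp

lemma inj_bound_between:
  assumes "u < n" "u' < n" "v \<le> n" "proj_bound c u < v" "v \<le> proj_bound c u'"
  shows "u < inj_bound c v" "inj_bound c v \<le> u'"
  using inj_bound_le_iff[of u v] inj_bound_le_iff[of u' v] assms by auto

lemma inj_bound_const:
  assumes "i \<le> v" "v \<le> proj_bound c (inj_bound c i)" "v \<le> n"
  shows "inj_bound c v = inj_bound c i"
  using inj_bound_le_iff[OF inj_bound_less_n, of i v] inj_bound_mono[of i v] assms by simp

end

fun orbit2 :: "('a \<Rightarrow> 'a) \<Rightarrow> 'a \<Rightarrow> 'a \<Rightarrow> nat \<Rightarrow> 'a" where
  "orbit2 f u v 0 = u"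
| "orbit2 f u v (Suc 0) = v"
| "orbit2 f u v (Suc (Suc t)) = f (orbit2 f u v t)"

lemma orbit2_odd_indep: "odd t \<Longrightarrow> orbit2 f u v t = orbit2 f u' v t"
  by (induction t rule: nat_induct2) auto

lemma syz_Suc:
  "syz c (Suc u, v) = (if v < proj_bound c u then Some (Suc v, proj_bound c u) else None)"
  by (simp add: syz_def proj_bound_def)

lemma cosyz_Suc:
  "injstart c v = Suc (inj_bound c v) \<Longrightarrow>
    cosyz c (Suc u, v) = (if inj_bound c v < u then Some (Suc (inj_bound c v), u) else None)"
  by (simp add: cosyz_def)

lemma syzo_funpow:
  fixes c :: "nat \<Rightarrow> nat" and u v :: nat
  defines "w \<equiv> orbit2 (proj_bound c) u v"
  shows "(syzo c ^^ k) (Some (Suc u, v)) =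
    (if \<forall>t<k. w (Suc t) < w (Suc (Suc t)) then Some (Suc (w k), w (Suc k)) else None)"
  unfolding w_def
  by (induction k) (auto simp: syzo_def syz_Suc less_Suc_eq)

lemma orbit2_strict_below_pdim:
  fixes c :: "nat \<Rightarrow> nat" and u v :: nat
  defines "w \<equiv> orbit2 (proj_bound c) u v"
  assumes "t < pdim c (Suc u, v)"
  shows "w (Suc t) < w (Suc (Suc t))"
proof -
  have "(syzo c ^^ Suc t) (Some (Suc u, v)) \<noteq> None"
    using not_less_Least assms(2) unfolding pdim_def by blast
  then show ?thesis unfolding syzo_funpow w_def by (auto split: if_splits)
qed

context linear_nakayama
begin

lemma orbit2_proj_bound_le:
  fixes u v :: nat
  defines "w \<equiv> orbit2 (proj_bound c) u v"
  assumes "v \<le> n" "\<forall>s\<le>K. w s < w (Suc s)" "t \<le> Suc K"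
  shows "w t \<le> n"
  using assms(4)
proof (induction t rule: induct_nat_012)
  case 0
  then show ?case using assms(2,3) by (fastforce simp: w_def)
next
  case (ge2 t)
  then have "w t < w (Suc t)" "w (Suc t) \<le> n" using assms(3) by simp_all
  then show ?case using proj_bound_le by (simp add: w_def)
qed (use assms(2) in \<open>simp add: w_def\<close>)

lemma orbit2_proj_bound_mono:
  assumes "u \<le> u'" "\<forall>s<t. orbit2 (proj_bound c) u' v s < n"
  shows "orbit2 (proj_bound c) u v t \<le> orbit2 (proj_bound c) u' v t"
  using assms(2)
proof (induction t rule: nat_induct2)
  case (step t)
  then show ?case using proj_bound_mono by simp
qed (simp_all add: assms(1))

lemma orbit2_inj_bound_le: "u \<le> n \<Longrightarrow> v \<le> n \<Longrightarrow> orbit2 (inj_bound c) u v t \<le> n"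
  by (induction t rule: nat_induct2) (auto intro: le_trans[OF inj_bound_le])

lemma cosyzo_funpow:
  fixes u v :: nat
  defines "y \<equiv> orbit2 (inj_bound c) v u"
  assumes "u \<le> n" "v \<le> n"
  shows "(cosyzo c ^^ k) (Some (Suc u, v)) =
    (if \<forall>t<k. y (Suc (Suc t)) < y (Suc t) then Some (Suc (y (Suc k)), y k) else None)"
proof -
  have "injstart c (y t) = Suc (inj_bound c (y t))" for t
    using injstart_eq orbit2_inj_bound_le assms(2,3) by (simp add: y_def)
  then show ?thesis
    unfolding y_def by (induction k) (auto simp: cosyzo_def cosyz_Suc less_Suc_eq)
qed

lemma idim_eq:
  fixes u v :: nat
  defines "y \<equiv> orbit2 (inj_bound c) v u"
  assumes "u \<le> n" "v \<le> n"
    and "\<forall>t<d. y (Suc (Suc t)) < y (Suc t)" "\<not> y (Suc (Suc d)) < y (Suc d)"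
  shows "idim c (Suc u, v) = d"
  unfolding idim_def
proof (rule Least_equality)
  note iter = cosyzo_funpow[OF assms(2,3), folded y_def]
  show "(cosyzo c ^^ Suc d) (Some (Suc u, v)) = None"
    using assms(5) unfolding iter by auto
  fix m
  assume "(cosyzo c ^^ Suc m) (Some (Suc u, v)) = None"
  then obtain t where "t \<le> m" "\<not> y (Suc (Suc t)) < y (Suc t)"
    unfolding iter by (auto simp: less_Suc_eq_le split: if_splits)
  then show "d \<le> m" using assms(4) by (meson le_trans not_le)
qed

lemma inj_coresol_term_eq:
  fixes u v :: nat
  defines "y \<equiv> orbit2 (inj_bound c) v u"
  assumes "u \<le> n" "v \<le> n" "\<forall>t<d. y (Suc (Suc t)) < y (Suc t)"
  shows "inj_coresol_term c (Suc u, v) d = injmod c (y d)"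
  using assms(4) by (simp add: inj_coresol_term_def cosyzo_funpow[OF assms(2,3)] y_def)

lemma is_mod_truncated_inj:
  assumes "inj_bound c j < b" "b < j" "j \<le> n"
  shows "is_mod n c (Suc (inj_bound c j), b)"
  using le_proj_bound_inj_bound[OF assms(3)] assms by (auto simp: is_mod_def proj_bound_def)

lemma dimvec_truncated_inj:
  assumes "1 \<le> l" "l \<le> b" "b < j" "j \<le> n"
  shows "dimvec (Suc (inj_bound c j), b) l = cartan c j l"
proof -
  have "j - l + 1 \<le> c l \<longleftrightarrow> j \<le> proj_bound c (l - 1)"
    using path_iff_le_proj_bound assms by simp
  also have "\<dots> \<longleftrightarrow> inj_bound c j \<le> l - 1"
    using inj_bound_le_iff[of "l - 1" j] assms by simp
  finally show ?thesis using assms by (auto simp: dimvec_def cartan_def)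
qed

end

locale simple_syzygy_orbits = linear_nakayama +
  fixes i e :: nat
  assumes i_range: "1 \<le> i" "i \<le> n"
    and e_ge_2: "2 \<le> e"
    and e_le_pdim: "e \<le> pdim c (simple i)" "e \<le> pdim c (injmod c i)"
begin

definition syzS :: "nat \<Rightarrow> nat" where
  "syzS = orbit2 (proj_bound c) (i - 1) i"

definition syzI :: "nat \<Rightarrow> nat" where
  "syzI = orbit2 (proj_bound c) (inj_bound c i) i"

definition cosyzM :: "nat \<Rightarrow> nat" where
  "cosyzM = orbit2 (inj_bound c) (syzI e) (inj_bound c (syzI (Suc e)))"

definition M :: "nat \<times> nat" where
  "M = (Suc (inj_bound c (syzI (Suc e))), syzI e)"

lemma simple_eq: "simple i = (Suc (i - 1), i)"
  using i_range by (simp add: simple_def)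

lemma injmod_eq: "injmod c i = (Suc (inj_bound c i), i)"
  using injstart_eq i_range by (simp add: injmod_def)

lemma inj_bound_i_less: "inj_bound c i < i"
  using inj_bound_less i_range by simp

lemma syzS_strict: "t \<le> e \<Longrightarrow> syzS t < syzS (Suc t)"
  using orbit2_strict_below_pdim[of "t - 1" c "i - 1" i] e_le_pdim(1) i_range
  by (cases t) (simp_all add: syzS_def simple_eq)

lemma syzI_strict: "t \<le> e \<Longrightarrow> syzI t < syzI (Suc t)"
  using orbit2_strict_below_pdim[of "t - 1" c "inj_bound c i" i] e_le_pdim(2) inj_bound_i_less
  by (cases t) (simp_all add: syzI_def injmod_eq)

lemma syzS_le_n: "t \<le> Suc e \<Longrightarrow> syzS t \<le> n"
  using orbit2_proj_bound_le[of i] syzS_strict i_range unfolding syzS_def by blast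

lemma syzI_le_n: "t \<le> Suc e \<Longrightarrow> syzI t \<le> n"
  using orbit2_proj_bound_le[of i] syzI_strict i_range unfolding syzI_def by blast

lemma syzS_less_n: "t \<le> e \<Longrightarrow> syzS t < n"
  using syzS_strict syzS_le_n[of "Suc t"] by fastforce

lemma syzI_less_n: "t \<le> e \<Longrightarrow> syzI t < n"
  using syzI_strict syzI_le_n[of "Suc t"] by fastforce

lemma syzI_le_syzS: "t \<le> Suc e \<Longrightarrow> syzI t \<le> syzS t"
  using orbit2_proj_bound_mono[of "inj_bound c i" "i - 1" t i] inj_bound_i_less syzS_less_n
  unfolding syzS_def syzI_def by fastforce

lemma syzS_less_syzI_Suc:
  assumes "t \<le> e"
  shows "syzS t < syzI (Suc t)"
proof (cases "even t")
  case True
  then have "syzS (Suc t) = syzI (Suc t)"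
    unfolding syzS_def syzI_def by (simp add: orbit2_odd_indep)
  then show ?thesis using syzS_strict[OF assms] by simp
next
  case False
  then have "syzS t = syzI t"
    unfolding syzS_def syzI_def by (simp add: orbit2_odd_indep)
  then show ?thesis using syzI_strict[OF assms] by simp
qed

lemma inj_bound_bracket:
  assumes "Suc (Suc r) \<le> e" "syzS (Suc (Suc r)) < v" "v \<le> syzI (Suc (Suc (Suc r)))"
  shows "syzS r < inj_bound c v \<and> inj_bound c v \<le> syzI (Suc r)"
  using inj_bound_between[of "syzS r" "syzI (Suc r)" v] assms
    syzS_less_n[of r] syzI_less_n[of "Suc r"] syzI_le_n[of "Suc (Suc (Suc r))"]
  by (simp add: syzS_def syzI_def)

lemma cosyzM_bracket: "t < e \<Longrightarrow> syzS (e - Suc t) < cosyzM t \<and> cosyzM t \<le> syzI (e - t)"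
proof (induction t rule: nat_induct2)
  case 0
  then show ?case using syzS_less_syzI_Suc[of "e - 1"] by (simp add: cosyzM_def)
next
  case 1
  have "Suc (Suc (e - 2)) = e" "Suc (e - 2) = e - 1" using e_ge_2 by simp_all
  then show ?case
    using inj_bound_bracket[of "e - 2" "syzI (Suc e)"] syzS_less_syzI_Suc[of e]
    by (simp add: cosyzM_def numeral_2_eq_2)
next
  case (step t)
  define r where "r = e - Suc (Suc (Suc t))"
  have "Suc (Suc r) = e - Suc t" "Suc (Suc (Suc r)) = e - t" "Suc r = e - (t + 2)" "r = e - Suc (t + 2)"
    using step.prems by (simp_all add: r_def)
  then show ?case
    using inj_bound_bracket[of r "cosyzM t"] step by (simp add: cosyzM_def)
qed

lemma cosyzM_Suc_Suc: "cosyzM (Suc (Suc t)) = inj_bound c (cosyzM t)"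
  by (simp add: cosyzM_def)

lemma cosyzM_pred_e: "cosyzM (e - 1) = i"
  using cosyzM_bracket[of "e - 1"] e_ge_2 i_range by (simp add: syzS_def syzI_def) linarith

lemma cosyzM_e: "cosyzM e = inj_bound c i"
proof -
  have e: "e = Suc (Suc (e - 2))" using e_ge_2 by simp
  have "i < cosyzM (e - 2)" "cosyzM (e - 2) \<le> proj_bound c (inj_bound c i)"
    using cosyzM_bracket[of "e - 2"] e_ge_2 by (simp_all add: syzS_def syzI_def numeral_2_eq_2)
  moreover have "proj_bound c (inj_bound c i) \<le> n"
    using proj_bound_le inj_bound_less_n i_range by simp
  ultimately have "inj_bound c (cosyzM (e - 2)) = inj_bound c i"
    by (intro inj_bound_const) simp_all
  then show ?thesis using cosyzM_Suc_Suc[of "e - 2"] e by simp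
qed

lemma cosyzM_Suc_e: "cosyzM (Suc e) = inj_bound c i"
proof -
  have "Suc e = Suc (Suc (e - 1))" using e_ge_2 by simp
  then show ?thesis using cosyzM_Suc_Suc[of "e - 1"] cosyzM_pred_e by simp
qed

lemma cosyzM_strict:
  assumes "t < e"
  shows "cosyzM (Suc t) < cosyzM t"
proof (cases "Suc t < e")
  case True
  moreover have "syzI (e - Suc t) \<le> syzS (e - Suc t)"
    by (rule syzI_le_syzS) simp
  ultimately have "cosyzM (Suc t) \<le> syzS (e - Suc t)"
    using cosyzM_bracket[of "Suc t"] by simp
  then show ?thesis using cosyzM_bracket[of t] assms by simp
next
  case False
  then have "t = e - 1" "Suc t = e" using assms by simp_all
  then show ?thesis using cosyzM_pred_e cosyzM_e inj_bound_i_less by simp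
qed

lemma M_bounds: "inj_bound c (syzI (Suc e)) \<le> n" "syzI e \<le> n"
  using inj_bound_less_n[of "syzI (Suc e)"] syzI_le_n[of "Suc e"] syzI_le_n[of e] by simp_all

lemma idim_M: "idim c M = e - 1"
  unfolding M_def
proof (rule idim_eq[OF M_bounds, folded cosyzM_def])
  show "\<forall>t<e - 1. cosyzM (Suc (Suc t)) < cosyzM (Suc t)"
    using cosyzM_strict by simp
  show "\<not> cosyzM (Suc (Suc (e - 1))) < cosyzM (Suc (e - 1))"
    using cosyzM_e cosyzM_Suc_e e_ge_2 by simp
qed

lemma inj_coresol_term_M: "inj_coresol_term c M (e - 1) = injmod c i"
  unfolding M_def
  using inj_coresol_term_eq[OF M_bounds, folded cosyzM_def, of "e - 1"] cosyzM_strict cosyzM_pred_e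
  by simp

lemma M_is_mod: "is_mod n c M"
  unfolding M_def
  using is_mod_truncated_inj cosyzM_strict[of 0] syzI_strict[of e] syzI_le_n[of "Suc e"] e_ge_2
  by (simp add: cosyzM_def)

lemma dimvec_M_below: "1 \<le> l \<Longrightarrow> l \<le> syzI e \<Longrightarrow> dimvec M l = cartan c (syzI (Suc e)) l"
  unfolding M_def using dimvec_truncated_inj syzI_strict[of e] syzI_le_n[of "Suc e"] by simp

lemma dimvec_M_above: "syzI e < l \<Longrightarrow> dimvec M l = 0"
  by (simp add: M_def dimvec_def)

lemma i_less_syzI: "i < syzI (Suc e)"
proof -
  have "syzI 1 < syzI (Suc e)"
    by (rule lift_Suc_mono_less_ivl[where N = "{..e}"]) (use syzI_strict e_ge_2 in auto)
  then show ?thesis by (simp add: syzI_def)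
qed

lemma hhat_eq:
  assumes "e = e_simple c i"
  shows "hhat c i = Suc (syzI e)"
proof (cases "odd e")
  case True
  have "\<forall>t<e. syzS (Suc t) < syzS (Suc (Suc t))"
    using syzS_strict by simp
  then have "(syzo c ^^ e) (Some (simple i)) = Some (Suc (syzS e), syzS (Suc e))"
    unfolding simple_eq syzo_funpow by (simp add: syzS_def)
  moreover have "syzS e = syzI e"
    using True unfolding syzS_def syzI_def by (simp add: orbit2_odd_indep)
  ultimately show ?thesis using True assms by (simp add: hhat_def N_simple_def)
next
  case False
  have "\<forall>t<e. syzI (Suc t) < syzI (Suc (Suc t))"
    using syzI_strict by simp
  then have "(syzo c ^^ e) (Some (injmod c i)) = Some (Suc (syzI e), syzI (Suc e))"
    unfolding injmod_eq syzo_funpow by (simp add: syzI_def)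
  then show ?thesis using False assms by (simp add: hhat_def N_simple_def)
qed

end

theorem lemma3p3:
  fixes n :: nat and c :: "nat \<Rightarrow> nat" and i :: nat
  assumes "kupisch n c"
    and "i \<in> {1..n}"
    and "e_simple c i \<ge> 2"
  shows "\<exists>M. is_mod n c M \<and>
           idim c M = e_simple c i - 1 \<and>
           inj_coresol_term c M (idim c M) = injmod c i \<and>
           (\<exists>j. i < j \<and> j \<le> n \<and>
              (\<forall>l\<in>{1..<hhat c i}. dimvec M l = cartan c j l) \<and>
              (\<forall>l\<in>{hhat c i..n}. dimvec M l = 0))"
proof -
  interpret linear_nakayama n c
    using assms(1) by unfold_locales
  interpret simple_syzygy_orbits n c i "e_simple c i"
    using assms by unfold_locales (auto simp: e_simple_def)
  note hhat = hhat_eq[OF refl]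
  show ?thesis
  proof (intro exI conjI ballI)
    show "is_mod n c M" by (rule M_is_mod)
    show "idim c M = e_simple c i - 1" by (rule idim_M)
    show "inj_coresol_term c M (idim c M) = injmod c i"
      unfolding idim_M by (rule inj_coresol_term_M)
    show "i < syzI (Suc (e_simple c i))" by (rule i_less_syzI)
    show "syzI (Suc (e_simple c i)) \<le> n" by (rule syzI_le_n) simp
    show "dimvec M l = cartan c (syzI (Suc (e_simple c i))) l" if "l \<in> {1..<hhat c i}" for l
      using that hhat by (intro dimvec_M_below) auto
    show "dimvec M l = 0" if "l \<in> {hhat c i..n}" for l
      using that hhat by (intro dimvec_M_above) auto
  qed
qed

end
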